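(* Let $S,P,Q$ be pairwise disjoint finite sets and $\mathcal{M}_{SP},\mathcal{M}_{PQ}$ matroids on $S\uplus P$, $P\uplus Q$ with $\mathcal{M}_{SP}\circ P=\mathcal{M}^*_{PQ}\circ P$ and $\mathcal{M}_{SP}\times P=\mathcal{M}^*_{PQ}\times P$. Then: 1. $(\mathcal{M}_{SP}\leftrightarrow\mathcal{M}_{PQ})\circ S=\mathcal{M}_{SP}\circ S$ and $(\mathcal{M}_{SP}\leftrightarrow\mathcal{M}_{PQ})\times S=\mathcal{M}_{SP}\times S$. 2. $\mathcal{M}^*_{SP}\circ P=\mathcal{M}_{PQ}\circ P$, $\mathcal{M}^*_{SP}\times P=\mathcal{M}_{PQ}\times P$, and $(\mathcal{M}_{SP}\leftrightarrow\mathcal{M}_{PQ})\circ Q=\mathcal{M}_{PQ}\circ Q$, $(\mathcal{M}_{SP}\leftrightarrow\mathcal{M}_{PQ})\times Q=\mathcal{M}_{PQ}\times Q$.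
   Context: Matroids on finite sets, given by bases; $\mathcal{M}^*$ dual. $\mathcal{M}\circ T$ restriction (independent sets inside $T$), $\mathcal{M}\times T$ contraction (bases = minimal sets $b\cap T$, $b$ a base). $\mathbf{0}_X$ only base $\emptyset$; $\oplus$ direct sum. For matroids on the same set, $\mathcal{M}_1\vee\mathcal{M}_2$ has bases the maximal sets $b_1\cup b_2$. $\mathcal{M}_{SP}\leftrightarrow\mathcal{M}_{PQ}:=((\mathcal{M}_{SP}\oplus\mathbf{0}_Q)\vee(\mathcal{M}_{PQ}\oplus\mathbf{0}_S))\times(S\uplus Q)$. *)

theory Defs
  imports Main
begin

text \<open>A matroid on a finite ground set E is represented by its set of bases.
  Matroid operations act on the set of bases; the ground set is tracked explicitly
  where needed (the dual).\<close>

definition maxsets :: "'a set set \<Rightarrow> 'a set set" where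
  "maxsets F = {X \<in> F. \<forall>Y\<in>F. X \<subseteq> Y \<longrightarrow> Y = X}"

definition minsets :: "'a set set \<Rightarrow> 'a set set" where
  "minsets F = {X \<in> F. \<forall>Y\<in>F. Y \<subseteq> X \<longrightarrow> Y = X}"

definition is_matroid :: "'a set \<Rightarrow> 'a set set \<Rightarrow> bool" where
  "is_matroid E B \<longleftrightarrow> finite E \<and> B \<noteq> {} \<and> (\<forall>b\<in>B. b \<subseteq> E) \<and>
     (\<forall>b1\<in>B. \<forall>b2\<in>B. \<forall>x\<in>b1 - b2. \<exists>y\<in>b2 - b1. insert y (b1 - {x}) \<in> B)"

definition mdual :: "'a set \<Rightarrow> 'a set set \<Rightarrow> 'a set set" where
  "mdual E B = (\<lambda>b. E - b) ` B"

text \<open>Restriction M \<circ> T: bases are the maximal independent sets inside T.\<close>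
definition mrestr :: "'a set set \<Rightarrow> 'a set \<Rightarrow> 'a set set" where
  "mrestr B T = maxsets {b \<inter> T | b. b \<in> B}"

definition mcontr :: "'a set set \<Rightarrow> 'a set \<Rightarrow> 'a set set" where
  "mcontr B T = minsets {b \<inter> T | b. b \<in> B}"

definition mzero :: "'a set set" where
  "mzero = {{}}"

definition mdsum :: "'a set set \<Rightarrow> 'a set set \<Rightarrow> 'a set set" where
  "mdsum B1 B2 = {b1 \<union> b2 | b1 b2. b1 \<in> B1 \<and> b2 \<in> B2}"

definition munion :: "'a set set \<Rightarrow> 'a set set \<Rightarrow> 'a set set" where
  "munion B1 B2 = maxsets {b1 \<union> b2 | b1 b2. b1 \<in> B1 \<and> b2 \<in> B2}"

definition mlink :: "'a set \<Rightarrow> 'a set \<Rightarrow> 'a set set \<Rightarrow> 'a set set \<Rightarrow> 'a set set" where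
  "mlink S Q Bsp Bpq = mcontr (munion (mdsum Bsp mzero) (mdsum Bpq mzero)) (S \<union> Q)"

end

theory Submission
  imports Defs
begin

text \<open>The dual statements are pure complementation: inside \<open>P\<close>, the restriction of a dual is
  the complement of the contraction and vice versa.

  For the statements about \<open>S\<close>, the hypothesis on contractions makes every base of
  \<open>M\<^sub>P\<^sub>Q\<close> disjoint from some base of \<open>M\<^sub>S\<^sub>P\<close>; by the exchange axiom the bases of the
  union are then exactly the disjoint unions \<open>b\<^sub>1 \<union> b\<^sub>2\<close>, all of the same size, and those
  covering \<open>P\<close> leave a trace of least size, hence a base, on \<open>S \<union> Q\<close>. A base \<open>b\<close> of
  \<open>M\<^sub>S\<^sub>P\<close> with maximal (minimal) trace on \<open>S\<close> has minimal (maximal) trace on \<open>P\<close>, which by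
  hypothesis is \<open>P - b\<^sub>2\<close> for a base \<open>b\<^sub>2\<close> of \<open>M\<^sub>P\<^sub>Q\<close>. So \<open>b \<inter> S\<close> is the trace of a base of
  the linking, and the traces on \<open>S\<close> of the linking and of \<open>M\<^sub>S\<^sub>P\<close> have the same maximal
  and minimal members. The statements about \<open>Q\<close> follow by symmetry.\<close>

lemma maxsetsI: "X \<in> F \<Longrightarrow> (\<And>Y. Y \<in> F \<Longrightarrow> X \<subseteq> Y \<Longrightarrow> Y = X) \<Longrightarrow> X \<in> maxsets F"
  unfolding maxsets_def by blast

lemma minsetsI: "X \<in> F \<Longrightarrow> (\<And>Y. Y \<in> F \<Longrightarrow> Y \<subseteq> X \<Longrightarrow> Y = X) \<Longrightarrow> X \<in> minsets F"
  unfolding minsets_def by blast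

lemma maxsets_subset: "maxsets F \<subseteq> F"
  unfolding maxsets_def by blast

lemma minsets_subset: "minsets F \<subseteq> F"
  unfolding minsets_def by blast

lemma maxsetsD: "X \<in> maxsets F \<Longrightarrow> Y \<in> F \<Longrightarrow> X \<subseteq> Y \<Longrightarrow> Y = X"
  unfolding maxsets_def by blast

lemma minsetsD: "X \<in> minsets F \<Longrightarrow> Y \<in> F \<Longrightarrow> Y \<subseteq> X \<Longrightarrow> Y = X"
  unfolding minsets_def by blast

lemma ex_maxsets_supset:
  assumes "finite F" "X \<in> F" shows "\<exists>Z\<in>maxsets F. X \<subseteq> Z"
proof -
  obtain Z where "Z \<in> F" "X \<subseteq> Z" "\<forall>Y\<in>F. Z \<subseteq> Y \<longrightarrow> Z = Y"
    using finite_has_maximal2[OF assms] by blast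
  then show ?thesis by (metis maxsetsI)
qed

lemma ex_minsets_subset:
  assumes "finite F" "X \<in> F" shows "\<exists>Z\<in>minsets F. Z \<subseteq> X"
proof -
  obtain Z where "Z \<in> F" "Z \<subseteq> X" "\<forall>Y\<in>F. Y \<subseteq> Z \<longrightarrow> Z = Y"
    using finite_has_minimal2[OF assms] by blast
  then show ?thesis by (metis minsetsI)
qed

lemma maxsets_eq_if_subset:
  assumes "finite F'" "F \<subseteq> F'" "maxsets F' \<subseteq> F"
  shows "maxsets F = maxsets F'"
proof (intro antisym subsetI)
  fix X assume X: "X \<in> maxsets F"
  then have "X \<in> F'" using assms(2) maxsets_subset by blast
  then obtain Z where "Z \<in> maxsets F'" "X \<subseteq> Z" using ex_maxsets_supset[OF assms(1)] by blast
  then show "X \<in> maxsets F'" using maxsetsD[OF X] assms(3) by auto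
next
  fix X assume "X \<in> maxsets F'"
  then show "X \<in> maxsets F" using assms(2,3) unfolding maxsets_def by blast
qed

lemma minsets_eq_if_subset:
  assumes "finite F'" "F \<subseteq> F'" "minsets F' \<subseteq> F"
  shows "minsets F = minsets F'"
proof (intro antisym subsetI)
  fix X assume X: "X \<in> minsets F"
  then have "X \<in> F'" using assms(2) minsets_subset by blast
  then obtain Z where "Z \<in> minsets F'" "Z \<subseteq> X" using ex_minsets_subset[OF assms(1)] by blast
  then show "X \<in> minsets F'" using minsetsD[OF X] assms(3) by auto
next
  fix X assume "X \<in> minsets F'"
  then show "X \<in> minsets F" using assms(2,3) unfolding minsets_def by blast
qed

lemma maxsets_if_card_greatest:
  assumes "X \<in> F" "\<And>Y. Y \<in> F \<Longrightarrow> finite Y \<and> card Y \<le> card X"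
  shows "X \<in> maxsets F"
proof (rule maxsetsI[OF assms(1)])
  fix Y assume "Y \<in> F" "X \<subseteq> Y"
  then show "Y = X" using assms(2) card_seteq by blast
qed

lemma minsets_if_card_least:
  assumes "X \<in> F" "finite X" "\<And>Y. Y \<in> F \<Longrightarrow> card X \<le> card Y"
  shows "X \<in> minsets F"
proof (rule minsetsI[OF assms(1)])
  fix Y assume "Y \<in> F" "Y \<subseteq> X"
  then show "Y = X" using assms(2,3) card_seteq by blast
qed

lemma Diff_eq_Diff_iff: "X \<subseteq> P \<Longrightarrow> Y \<subseteq> P \<Longrightarrow> P - X = P - Y \<longleftrightarrow> X = Y"
  by blast

lemma maxsets_image_Diff:
  assumes "\<forall>X\<in>F. X \<subseteq> P"
  shows "maxsets ((-) P ` F) = (-) P ` minsets F"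
proof (intro set_eqI iffI)
  fix Z assume Z: "Z \<in> maxsets ((-) P ` F)"
  then obtain X where X: "X \<in> F" "Z = P - X" using maxsets_subset by blast
  have "X \<in> minsets F"
  proof (rule minsetsI[OF X(1)])
    fix Y assume "Y \<in> F" "Y \<subseteq> X"
    then have "P - Y = P - X" using maxsetsD[OF Z, of "P - Y"] X(2) by blast
    then show "Y = X" using assms X(1) \<open>Y \<in> F\<close> by (simp add: Diff_eq_Diff_iff)
  qed
  then show "Z \<in> (-) P ` minsets F" using X by blast
next
  fix Z assume "Z \<in> (-) P ` minsets F"
  then obtain X where X: "X \<in> minsets F" "Z = P - X" by blast
  then have "X \<in> F" using minsets_subset by blast
  show "Z \<in> maxsets ((-) P ` F)"
  proof (rule maxsetsI)
    show "Z \<in> (-) P ` F" using X \<open>X \<in> F\<close> by blast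
    fix W assume "W \<in> (-) P ` F" "Z \<subseteq> W"
    then obtain Y where "Y \<in> F" "W = P - Y" by blast
    then have "Y \<subseteq> X" using \<open>Z \<subseteq> W\<close> X(2) \<open>X \<in> F\<close> assms by blast
    then show "W = Z" using minsetsD[OF X(1) \<open>Y \<in> F\<close>] \<open>W = P - Y\<close> X(2) by simp
  qed
qed

lemma image_Diff_Diff:
  assumes "\<forall>X\<in>F. X \<subseteq> P"
  shows "(-) P ` (-) P ` F = F"
proof -
  have "(-) P ` (-) P ` F = (\<lambda>X. P - (P - X)) ` F" by (simp add: image_image)
  also have "\<dots> = F" using assms by (simp add: Diff_Diff_Int Int_absorb1)
  finally show ?thesis .
qed

lemma minsets_image_Diff:
  assumes "\<forall>X\<in>F. X \<subseteq> P"
  shows "minsets ((-) P ` F) = (-) P ` maxsets F"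
proof -
  let ?G = "(-) P ` F"
  have "\<forall>X\<in>minsets ?G. X \<subseteq> P" using minsets_subset by blast
  then have "minsets ?G = (-) P ` (-) P ` minsets ?G" by (simp add: image_Diff_Diff)
  also have "(-) P ` minsets ?G = maxsets ((-) P ` ?G)" by (rule maxsets_image_Diff[symmetric]) blast
  also have "(-) P ` ?G = F" using assms by (rule image_Diff_Diff)
  finally show ?thesis .
qed

lemma is_matroid_base_subset: "is_matroid E B \<Longrightarrow> b \<in> B \<Longrightarrow> b \<subseteq> E"
  unfolding is_matroid_def by blast

lemma is_matroid_finite_base: "is_matroid E B \<Longrightarrow> b \<in> B \<Longrightarrow> finite b"
  unfolding is_matroid_def by (meson finite_subset)

lemma is_matroid_finite_bases: "is_matroid E B \<Longrightarrow> finite B"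
  unfolding is_matroid_def by (metis PowI finite_Pow_iff finite_subset subsetI)

lemma is_matroid_exchange:
  "is_matroid E B \<Longrightarrow> b1 \<in> B \<Longrightarrow> b2 \<in> B \<Longrightarrow> x \<in> b1 - b2 \<Longrightarrow>
   \<exists>y\<in>b2 - b1. insert y (b1 - {x}) \<in> B"
  unfolding is_matroid_def by blast

lemma card_insert_remove:
  "finite b \<Longrightarrow> x \<in> b \<Longrightarrow> y \<notin> b \<Longrightarrow> card (insert y (b - {x})) = card b"
  using card.remove[of b x] by simp

lemma is_matroid_card_bases_eq:
  assumes m: "is_matroid E B" and "b \<in> B" "b' \<in> B"
  shows "card b = card b'"
  using \<open>b \<in> B\<close>
proof (induction "card (b - b')" arbitrary: b rule: less_induct)
  case less
  show ?case
  proof (cases "b \<subseteq> b'")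
    case True
    have "b' \<subseteq> b"
    proof
      fix x assume "x \<in> b'"
      then show "x \<in> b" using is_matroid_exchange[OF m \<open>b' \<in> B\<close> less.prems] True by blast
    qed
    then show ?thesis using True by simp
  next
    case False
    then obtain x where x: "x \<in> b - b'" by blast
    obtain y where y: "y \<in> b' - b" "insert y (b - {x}) \<in> B"
      using is_matroid_exchange[OF m less.prems \<open>b' \<in> B\<close> x] by blast
    have fin: "finite b" using is_matroid_finite_base[OF m less.prems] .
    have "insert y (b - {x}) - b' = (b - b') - {x}" using x y by auto
    moreover have "card ((b - b') - {x}) < card (b - b')"
      using x fin by (intro card_Diff1_less) auto
    ultimately have "card (insert y (b - {x}) - b') < card (b - b')" by simp
    then have "card (insert y (b - {x})) = card b'" using less.hyps y(2) by blast
    then show ?thesis using card_insert_remove[OF fin] x y by simp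
  qed
qed

lemma is_matroid_dual_exchange:
  assumes m: "is_matroid E B" and b1: "b1 \<in> B" and b2: "b2 \<in> B" and x: "x \<in> b1 - b2"
  shows "\<exists>y\<in>b2 - b1. insert x (b2 - {y}) \<in> B"
proof -
  \<comment> \<open>A base through \<open>x\<close> and \<open>b1 \<inter> b2\<close> that is closest to \<open>b2\<close> must be \<open>insert x (b2 - {y})\<close>.\<close>
  let ?C = "\<lambda>b. b \<in> B \<and> x \<in> b \<and> b1 \<inter> b2 \<subseteq> b"
  obtain b where b: "?C b" and least: "\<And>b'. ?C b' \<Longrightarrow> card (b - b2) \<le> card (b' - b2)"
    using ex_has_least_nat[of ?C b1 "\<lambda>b. card (b - b2)"] b1 x by blast
  have fin: "finite b" "finite b2" using is_matroid_finite_base[OF m] b b2 by auto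
  have "b \<subseteq> insert x b2"
  proof
    fix z assume z: "z \<in> b"
    show "z \<in> insert x b2"
    proof (rule ccontr)
      assume z': "z \<notin> insert x b2"
      obtain y where y: "y \<in> b2 - b" "insert y (b - {z}) \<in> B"
        using is_matroid_exchange[OF m _ b2, of b z] b z z' by blast
      have "?C (insert y (b - {z}))" using y b z' by auto
      moreover have "insert y (b - {z}) - b2 = (b - b2) - {z}" using y z' by auto
      moreover have "card ((b - b2) - {z}) < card (b - b2)"
        using z z' fin by (intro card_Diff1_less) auto
      ultimately show False using least by fastforce
    qed
  qed
  moreover have "\<not> b2 \<subseteq> b"
  proof
    assume "b2 \<subseteq> b"
    then have "card (insert x b2) \<le> card b" using b fin by (intro card_mono) auto
    then show False using is_matroid_card_bases_eq[OF m, of b b2] b b2 x fin by simp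
  qed
  then obtain y where y: "y \<in> b2" "y \<notin> b" by blast
  ultimately have "b \<subseteq> insert x (b2 - {y})" by blast
  moreover have "card (insert x (b2 - {y})) = card b"
    using card_insert_remove[OF fin(2) y(1), of x] is_matroid_card_bases_eq[OF m, of b b2] b b2 x
    by simp
  ultimately have "b = insert x (b2 - {y})" using fin by (simp add: card_subset_eq)
  then show ?thesis using y b by auto
qed

definition traces :: "'a set set \<Rightarrow> 'a set \<Rightarrow> 'a set set" where
  "traces B T = (\<lambda>b. b \<inter> T) ` B"

lemma mrestr_traces: "mrestr B T = maxsets (traces B T)"
  unfolding mrestr_def traces_def by (simp add: setcompr_eq_image)

lemma mcontr_traces: "mcontr B T = minsets (traces B T)"
  unfolding mcontr_def traces_def by (simp add: setcompr_eq_image)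

lemma traces_subset: "X \<in> traces B T \<Longrightarrow> X \<subseteq> T"
  unfolding traces_def by blast

lemma finite_traces: "finite B \<Longrightarrow> finite (traces B T)"
  unfolding traces_def by simp

lemma mrestr_subset: "X \<in> mrestr B T \<Longrightarrow> X \<subseteq> T"
  unfolding mrestr_traces using maxsets_subset traces_subset by blast

lemma mcontr_subset: "X \<in> mcontr B T \<Longrightarrow> X \<subseteq> T"
  unfolding mcontr_traces using minsets_subset traces_subset by blast

lemma traces_mdual:
  assumes "P \<subseteq> E" shows "traces (mdual E B) P = (-) P ` traces B P"
proof -
  have "(E - b) \<inter> P = P - b \<inter> P" for b using assms by blast
  then show ?thesis unfolding traces_def mdual_def image_image by simp
qed

lemma mrestr_mdual: "P \<subseteq> E \<Longrightarrow> mrestr (mdual E B) P = (-) P ` mcontr B P"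
  unfolding mrestr_traces mcontr_traces traces_mdual
  by (rule maxsets_image_Diff) (simp add: traces_subset)

lemma mcontr_mdual: "P \<subseteq> E \<Longrightarrow> mcontr (mdual E B) P = (-) P ` mrestr B P"
  unfolding mrestr_traces mcontr_traces traces_mdual
  by (rule minsets_image_Diff) (simp add: traces_subset)

lemma mrestr_mdual_eq_if_mcontr_eq:
  assumes "P \<subseteq> E1" "P \<subseteq> E2" "mcontr M1 P = mcontr (mdual E2 M2) P"
  shows "mrestr (mdual E1 M1) P = mrestr M2 P"
proof -
  have "mrestr (mdual E1 M1) P = (-) P ` mcontr (mdual E2 M2) P"
    using assms(1,3) by (simp add: mrestr_mdual)
  also have "\<dots> = mrestr M2 P"
    using assms(2) by (simp add: mcontr_mdual image_Diff_Diff mrestr_subset)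
  finally show ?thesis .
qed

lemma mcontr_mdual_eq_if_mrestr_eq:
  assumes "P \<subseteq> E1" "P \<subseteq> E2" "mrestr M1 P = mrestr (mdual E2 M2) P"
  shows "mcontr (mdual E1 M1) P = mcontr M2 P"
proof -
  have "mcontr (mdual E1 M1) P = (-) P ` mrestr (mdual E2 M2) P"
    using assms(1,3) by (simp add: mcontr_mdual)
  also have "\<dots> = mcontr M2 P"
    using assms(2) by (simp add: mrestr_mdual image_Diff_Diff mcontr_subset)
  finally show ?thesis .
qed

lemma mcontr_trace_if_mrestr_trace:
  assumes m: "is_matroid (S \<union> P) M" and "S \<inter> P = {}" and b: "b \<in> M"
    and max: "b \<inter> S \<in> mrestr M S"
  shows "b \<inter> P \<in> mcontr M P"
  unfolding mcontr_traces
proof (rule minsetsI)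
  show "b \<inter> P \<in> traces M P" using b unfolding traces_def by blast
  fix Y assume "Y \<in> traces M P" and Y: "Y \<subseteq> b \<inter> P"
  then obtain b' where b': "b' \<in> M" "Y = b' \<inter> P" unfolding traces_def by blast
  show "Y = b \<inter> P"
  proof (rule ccontr)
    assume "Y \<noteq> b \<inter> P"
    then obtain x where x: "x \<in> b \<inter> P" "x \<notin> b'" using Y b' by blast
    then obtain y where y: "y \<in> b' - b" "insert y (b - {x}) \<in> M"
      using is_matroid_exchange[OF m b b'(1)] by blast
    have "y \<in> S" using y Y b' is_matroid_base_subset[OF m b'(1)] by blast
    have "insert y (b - {x}) \<inter> S \<in> traces M S" using y(2) unfolding traces_def by blast
    moreover have "b \<inter> S \<subseteq> insert y (b - {x}) \<inter> S" using x \<open>S \<inter> P = {}\<close> by blast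
    ultimately have "insert y (b - {x}) \<inter> S = b \<inter> S"
      using maxsetsD[OF max[unfolded mrestr_traces]] by blast
    then show False using \<open>y \<in> S\<close> y(1) by blast
  qed
qed

lemma mrestr_trace_if_mcontr_trace:
  assumes m: "is_matroid (S \<union> P) M" and "S \<inter> P = {}" and b: "b \<in> M"
    and min: "b \<inter> S \<in> mcontr M S"
  shows "b \<inter> P \<in> mrestr M P"
  unfolding mrestr_traces
proof (rule maxsetsI)
  show "b \<inter> P \<in> traces M P" using b unfolding traces_def by blast
  fix Y assume "Y \<in> traces M P" and Y: "b \<inter> P \<subseteq> Y"
  then obtain b' where b': "b' \<in> M" "Y = b' \<inter> P" unfolding traces_def by blast
  show "Y = b \<inter> P"
  proof (rule ccontr)
    assume "Y \<noteq> b \<inter> P"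
    then obtain x where x: "x \<in> b' \<inter> P" "x \<notin> b" using Y b' by blast
    then obtain y where y: "y \<in> b - b'" "insert x (b - {y}) \<in> M"
      using is_matroid_dual_exchange[OF m b'(1) b] by blast
    have "y \<in> S" using y Y b' is_matroid_base_subset[OF m b] by blast
    have "insert x (b - {y}) \<inter> S \<in> traces M S" using y(2) unfolding traces_def by blast
    moreover have "insert x (b - {y}) \<inter> S \<subseteq> b \<inter> S" using x \<open>S \<inter> P = {}\<close> by blast
    ultimately have "insert x (b - {y}) \<inter> S = b \<inter> S"
      using minsetsD[OF min[unfolded mcontr_traces]] by blast
    moreover have "y \<in> b \<inter> S" "y \<notin> insert x (b - {y})" using \<open>y \<in> S\<close> x y by auto
    ultimately show False by blast
  qed
qed

lemma card_union_bases_le: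
  assumes m1: "is_matroid E1 M1" and m2: "is_matroid E2 M2"
    and c: "c1 \<in> M1" "c2 \<in> M2" and b: "b1 \<in> M1" "b2 \<in> M2" "b1 \<inter> b2 = {}"
  shows "card (c1 \<union> c2) \<le> card (b1 \<union> b2)"
proof -
  have "card (c1 \<union> c2) \<le> card c1 + card c2" by (rule card_Un_le)
  also have "\<dots> = card b1 + card b2"
    using is_matroid_card_bases_eq[OF m1 c(1) b(1)] is_matroid_card_bases_eq[OF m2 c(2) b(2)] by simp
  also have "\<dots> = card (b1 \<union> b2)"
    using is_matroid_finite_base[OF m1 b(1)] is_matroid_finite_base[OF m2 b(2)] b(3)
    by (simp add: card_Un_disjoint)
  finally show ?thesis .
qed

lemma disjoint_if_maxsets_union:
  assumes m1: "is_matroid E1 M1" and avoid: "\<forall>b2\<in>M2. \<exists>b1\<in>M1. b1 \<inter> b2 = {}"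
    and b1: "b1 \<in> M1" and b2: "b2 \<in> M2"
    and max: "b1 \<union> b2 \<in> maxsets {b1 \<union> b2 | b1 b2. b1 \<in> M1 \<and> b2 \<in> M2}"
  shows "b1 \<inter> b2 = {}"
proof (rule ccontr)
  assume "b1 \<inter> b2 \<noteq> {}"
  then obtain x where x: "x \<in> b1" "x \<in> b2" by blast
  obtain b' where b': "b' \<in> M1" "b' \<inter> b2 = {}" using avoid b2 by blast
  obtain y where y: "y \<in> b' - b1" "insert y (b1 - {x}) \<in> M1"
    using is_matroid_exchange[OF m1 b1 b'(1)] x b' by blast
  have "insert y (b1 - {x}) \<union> b2 \<in> {b1 \<union> b2 | b1 b2. b1 \<in> M1 \<and> b2 \<in> M2}" using y(2) b2 by blast
  moreover have "b1 \<union> b2 \<subseteq> insert y (b1 - {x}) \<union> b2" using x by blast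
  ultimately have "insert y (b1 - {x}) \<union> b2 = b1 \<union> b2" using maxsetsD[OF max] by blast
  then show False using y b' by blast
qed

lemma munion_eq_disjoint_unions:
  assumes m1: "is_matroid E1 M1" and m2: "is_matroid E2 M2"
    and avoid: "\<forall>b2\<in>M2. \<exists>b1\<in>M1. b1 \<inter> b2 = {}"
  shows "munion M1 M2 = {b1 \<union> b2 | b1 b2. b1 \<in> M1 \<and> b2 \<in> M2 \<and> b1 \<inter> b2 = {}}"
proof -
  let ?U = "{b1 \<union> b2 | b1 b2. b1 \<in> M1 \<and> b2 \<in> M2}"
  show ?thesis
    unfolding munion_def
  proof (intro set_eqI iffI)
    fix c assume c: "c \<in> maxsets ?U"
    then obtain b1 b2 where b: "b1 \<in> M1" "b2 \<in> M2" "c = b1 \<union> b2"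
      using maxsets_subset by blast
    then show "c \<in> {b1 \<union> b2 | b1 b2. b1 \<in> M1 \<and> b2 \<in> M2 \<and> b1 \<inter> b2 = {}}"
      using disjoint_if_maxsets_union[OF m1 avoid b(1,2)] c by blast
  next
    fix c assume "c \<in> {b1 \<union> b2 | b1 b2. b1 \<in> M1 \<and> b2 \<in> M2 \<and> b1 \<inter> b2 = {}}"
    then obtain b1 b2 where b: "b1 \<in> M1" "b2 \<in> M2" "b1 \<inter> b2 = {}" "c = b1 \<union> b2" by blast
    show "c \<in> maxsets ?U"
    proof (rule maxsets_if_card_greatest)
      show "c \<in> ?U" using b by blast
      fix Y assume "Y \<in> ?U"
      then obtain c1 c2 where "c1 \<in> M1" "c2 \<in> M2" "Y = c1 \<union> c2" by blast
      then show "finite Y \<and> card Y \<le> card c"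
        using card_union_bases_le[OF m1 m2 _ _ b(1-3)] b(4)
          is_matroid_finite_base[OF m1] is_matroid_finite_base[OF m2] by simp
    qed
  qed
qed

lemma mdsum_mzero: "mdsum B mzero = B"
  unfolding mdsum_def mzero_def by auto

lemma munion_commute: "munion M2 M1 = munion M1 M2"
proof -
  have "{b2 \<union> b1 | b2 b1. b2 \<in> M2 \<and> b1 \<in> M1} = {b1 \<union> b2 | b1 b2. b1 \<in> M1 \<and> b2 \<in> M2}"
    by (auto simp: Un_commute)
  then show ?thesis unfolding munion_def by simp
qed

lemma mlink_eq_mcontr_munion: "mlink S Q M1 M2 = mcontr (munion M1 M2) (S \<union> Q)"
  unfolding mlink_def mdsum_mzero ..

lemma mlink_commute: "mlink Q S M2 M1 = mlink S Q M1 M2"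
  by (simp add: mlink_eq_mcontr_munion munion_commute Un_commute)

lemma card_split:
  assumes "finite c" "c \<subseteq> T \<union> P" "T \<inter> P = {}"
  shows "card c = card (c \<inter> T) + card (c \<inter> P)"
proof -
  have "c = (c \<inter> T) \<union> (c \<inter> P)" using assms(2) by blast
  moreover have "(c \<inter> T) \<inter> (c \<inter> P) = {}" using assms(3) by blast
  ultimately show ?thesis using assms(1) by (metis card_Un_disjoint finite_Int)
qed

lemma mcontr_trace_if_supset_compl:
  assumes "finite P" "T \<inter> P = {}"
    and D: "\<And>c. c \<in> D \<Longrightarrow> finite c \<and> c \<subseteq> T \<union> P \<and> card c = r"
    and "c \<in> D" "P \<subseteq> c"
  shows "c \<inter> T \<in> mcontr D T"
  unfolding mcontr_traces
proof (rule minsets_if_card_least)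
  show "c \<inter> T \<in> traces D T" using \<open>c \<in> D\<close> unfolding traces_def by blast
  show "finite (c \<inter> T)" using D[OF \<open>c \<in> D\<close>] by blast
  fix Y assume "Y \<in> traces D T"
  then obtain c' where c': "c' \<in> D" "Y = c' \<inter> T" unfolding traces_def by blast
  have "r = card Y + card (c' \<inter> P)" using D[OF c'(1)] card_split[OF _ _ \<open>T \<inter> P = {}\<close>] c'(2) by metis
  also have "\<dots> \<le> card Y + card P" using \<open>finite P\<close> by (simp add: card_mono)
  finally have "r \<le> card Y + card P" .
  moreover have "r = card (c \<inter> T) + card P"
    using D[OF \<open>c \<in> D\<close>] card_split[OF _ _ \<open>T \<inter> P = {}\<close>] \<open>P \<subseteq> c\<close> by (metis Int_absorb1)
  ultimately show "card (c \<inter> T) \<le> card Y" by simp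
qed

lemma ex_disjoint_base_if_mcontr_eq:
  assumes "S \<inter> Q = {}" and m1: "is_matroid (S \<union> P) M1" and m2: "is_matroid (P \<union> Q) M2"
    and hc: "mcontr M1 P = mcontr (mdual (P \<union> Q) M2) P" and b2: "b2 \<in> M2"
  shows "\<exists>b1\<in>M1. b1 \<inter> b2 = {}"
proof -
  have "b2 \<inter> P \<in> traces M2 P" using b2 unfolding traces_def by blast
  then obtain Z where Z: "Z \<in> mrestr M2 P" "b2 \<inter> P \<subseteq> Z"
    using ex_maxsets_supset[OF finite_traces[OF is_matroid_finite_bases[OF m2]]]
    unfolding mrestr_traces by blast
  then have "P - Z \<in> mcontr M1 P" using hc by (simp add: mcontr_mdual)
  then obtain b1 where b1: "b1 \<in> M1" "P - Z = b1 \<inter> P"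
    unfolding mcontr_traces traces_def using minsets_subset by blast
  have "b1 \<inter> b2 \<subseteq> P"
    using is_matroid_base_subset[OF m1 b1(1)] is_matroid_base_subset[OF m2 b2] \<open>S \<inter> Q = {}\<close> by blast
  then have "b1 \<inter> b2 = {}" using b1(2) Z(2) by blast
  then show ?thesis using b1(1) by blast
qed

lemma mlink_base_if_complementary:
  assumes "finite P" "S \<inter> P = {}" "S \<inter> Q = {}" "P \<inter> Q = {}"
    and m1: "is_matroid (S \<union> P) M1" and m2: "is_matroid (P \<union> Q) M2"
    and avoid: "\<forall>b2\<in>M2. \<exists>b1\<in>M1. b1 \<inter> b2 = {}"
    and b1: "b1 \<in> M1" and b2: "b2 \<in> M2" and compl: "b1 \<inter> P = P - b2"
  shows "(b1 \<union> b2) \<inter> (S \<union> Q) \<in> mlink S Q M1 M2"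
proof -
  note U = munion_eq_disjoint_unions[OF m1 m2 avoid]
  have "b1 \<inter> b2 \<subseteq> P"
    using is_matroid_base_subset[OF m1 b1] is_matroid_base_subset[OF m2 b2] \<open>S \<inter> Q = {}\<close> by blast
  then have disj: "b1 \<inter> b2 = {}" using compl by blast
  have "finite c \<and> c \<subseteq> (S \<union> Q) \<union> P \<and> card c = card (b1 \<union> b2)" if cU: "c \<in> munion M1 M2" for c
  proof -
    obtain c1 c2 where c: "c1 \<in> M1" "c2 \<in> M2" "c1 \<inter> c2 = {}" "c = c1 \<union> c2"
      using cU unfolding U by blast
    have "card c = card (b1 \<union> b2)"
      using card_union_bases_le[OF m1 m2 c(1,2) b1 b2 disj]
        card_union_bases_le[OF m1 m2 b1 b2 c(1-3)] c(4) by simp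
    moreover have "c \<subseteq> (S \<union> Q) \<union> P"
      using c(4) is_matroid_base_subset[OF m1 c(1)] is_matroid_base_subset[OF m2 c(2)] by blast
    moreover have "finite c"
      using c(4) is_matroid_finite_base[OF m1 c(1)] is_matroid_finite_base[OF m2 c(2)] by simp
    ultimately show ?thesis by simp
  qed
  moreover have "b1 \<union> b2 \<in> munion M1 M2" unfolding U using b1 b2 disj by blast
  moreover have "P \<subseteq> b1 \<union> b2" "(S \<union> Q) \<inter> P = {}" using compl assms(2,4) by auto
  ultimately show ?thesis
    unfolding mlink_eq_mcontr_munion using mcontr_trace_if_supset_compl \<open>finite P\<close> by metis
qed

lemma traces_mlink_subset:
  assumes "S \<inter> P = {}" "S \<inter> Q = {}" and m2: "is_matroid (P \<union> Q) M2"
  shows "traces (mlink S Q M1 M2) S \<subseteq> traces M1 S"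
proof
  fix X assume "X \<in> traces (mlink S Q M1 M2) S"
  then obtain c where "c \<in> munion M1 M2" "X = c \<inter> (S \<union> Q) \<inter> S"
    unfolding traces_def mlink_eq_mcontr_munion mcontr_traces using minsets_subset by blast
  then obtain b1 b2 where b: "b1 \<in> M1" "b2 \<in> M2" "X = (b1 \<union> b2) \<inter> S"
    unfolding munion_def using maxsets_subset by blast
  then have "X = b1 \<inter> S" using is_matroid_base_subset[OF m2 b(2)] assms(1,2) by blast
  then show "X \<in> traces M1 S" using b(1) unfolding traces_def by blast
qed

lemma mlink_trace_if_dual_trace:
  assumes "finite P" "S \<inter> P = {}" "S \<inter> Q = {}" "P \<inter> Q = {}"
    and m1: "is_matroid (S \<union> P) M1" and m2: "is_matroid (P \<union> Q) M2"
    and avoid: "\<forall>b2\<in>M2. \<exists>b1\<in>M1. b1 \<inter> b2 = {}"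
    and b: "b \<in> M1" and dual_trace: "b \<inter> P \<in> traces (mdual (P \<union> Q) M2) P"
  shows "b \<inter> S \<in> traces (mlink S Q M1 M2) S"
proof -
  obtain b2 where b2: "b2 \<in> M2" "b \<inter> P = P - b2"
    using dual_trace unfolding traces_mdual[OF Un_upper1] unfolding traces_def by blast
  have "(b \<union> b2) \<inter> (S \<union> Q) \<in> mlink S Q M1 M2"
    using mlink_base_if_complementary[OF assms(1-4) m1 m2 avoid b b2] .
  moreover have "(b \<union> b2) \<inter> (S \<union> Q) \<inter> S = b \<inter> S"
    using is_matroid_base_subset[OF m2 b2(1)] assms(2,3) by blast
  ultimately show ?thesis unfolding traces_def by (metis image_eqI)
qed

lemma mrestr_mcontr_mlink_left:
  assumes "finite P" "S \<inter> P = {}" "S \<inter> Q = {}" "P \<inter> Q = {}"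
    and m1: "is_matroid (S \<union> P) M1" and m2: "is_matroid (P \<union> Q) M2"
    and hr: "mrestr M1 P = mrestr (mdual (P \<union> Q) M2) P"
    and hc: "mcontr M1 P = mcontr (mdual (P \<union> Q) M2) P"
  shows "mrestr (mlink S Q M1 M2) S = mrestr M1 S \<and> mcontr (mlink S Q M1 M2) S = mcontr M1 S"
proof -
  have avoid: "\<forall>b2\<in>M2. \<exists>b1\<in>M1. b1 \<inter> b2 = {}"
    using ex_disjoint_base_if_mcontr_eq[OF \<open>S \<inter> Q = {}\<close> m1 m2 hc] by blast
  note link_trace = mlink_trace_if_dual_trace[OF assms(1-4) m1 m2 avoid]
  have restr_sub: "mrestr M1 S \<subseteq> traces (mlink S Q M1 M2) S"
  proof
    fix X assume X: "X \<in> mrestr M1 S"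
    then obtain b where b: "b \<in> M1" "X = b \<inter> S"
      unfolding mrestr_traces traces_def using maxsets_subset by blast
    have "b \<inter> P \<in> mcontr M1 P"
      using mcontr_trace_if_mrestr_trace[OF m1 \<open>S \<inter> P = {}\<close> b(1)] X b(2) by simp
    then have "b \<inter> P \<in> mcontr (mdual (P \<union> Q) M2) P" using hc by simp
    then have "b \<inter> P \<in> traces (mdual (P \<union> Q) M2) P"
      unfolding mcontr_traces using minsets_subset by blast
    then show "X \<in> traces (mlink S Q M1 M2) S" using link_trace b by blast
  qed
  have contr_sub: "mcontr M1 S \<subseteq> traces (mlink S Q M1 M2) S"
  proof
    fix X assume X: "X \<in> mcontr M1 S"
    then obtain b where b: "b \<in> M1" "X = b \<inter> S"
      unfolding mcontr_traces traces_def using minsets_subset by blast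
    have "b \<inter> P \<in> mrestr M1 P"
      using mrestr_trace_if_mcontr_trace[OF m1 \<open>S \<inter> P = {}\<close> b(1)] X b(2) by simp
    then have "b \<inter> P \<in> mrestr (mdual (P \<union> Q) M2) P" using hr by simp
    then have "b \<inter> P \<in> traces (mdual (P \<union> Q) M2) P"
      unfolding mrestr_traces using maxsets_subset by blast
    then show "X \<in> traces (mlink S Q M1 M2) S" using link_trace b by blast
  qed
  note sub = traces_mlink_subset[OF assms(2,3) m2]
  note fin = finite_traces[OF is_matroid_finite_bases[OF m1]]
  show ?thesis
    unfolding mrestr_traces mcontr_traces
    using maxsets_eq_if_subset[OF fin sub restr_sub[unfolded mrestr_traces]]
      minsets_eq_if_subset[OF fin sub contr_sub[unfolded mcontr_traces]] ..
qed

theorem lemma7: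
  fixes S P Q :: "'a set" and Msp Mpq :: "'a set set"
  assumes "finite S" and "finite P" and "finite Q"
    and "S \<inter> P = {}" and "S \<inter> Q = {}" and "P \<inter> Q = {}"
    and "is_matroid (S \<union> P) Msp" and "is_matroid (P \<union> Q) Mpq"
    and "mrestr Msp P = mrestr (mdual (P \<union> Q) Mpq) P"
    and "mcontr Msp P = mcontr (mdual (P \<union> Q) Mpq) P"
  shows "mrestr (mlink S Q Msp Mpq) S = mrestr Msp S
       \<and> mcontr (mlink S Q Msp Mpq) S = mcontr Msp S
       \<and> mrestr (mdual (S \<union> P) Msp) P = mrestr Mpq P
       \<and> mcontr (mdual (S \<union> P) Msp) P = mcontr Mpq P
       \<and> mrestr (mlink S Q Msp Mpq) Q = mrestr Mpq Q
       \<and> mcontr (mlink S Q Msp Mpq) Q = mcontr Mpq Q"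
proof -
  have dual_restr: "mrestr (mdual (P \<union> S) Msp) P = mrestr Mpq P"
    using mrestr_mdual_eq_if_mcontr_eq[OF Un_upper1 Un_upper1 assms(10)] .
  have dual_contr: "mcontr (mdual (P \<union> S) Msp) P = mcontr Mpq P"
    using mcontr_mdual_eq_if_mrestr_eq[OF Un_upper1 Un_upper1 assms(9)] .
  have "mrestr (mlink Q S Mpq Msp) Q = mrestr Mpq Q \<and> mcontr (mlink Q S Mpq Msp) Q = mcontr Mpq Q"
    using mrestr_mcontr_mlink_left[of P Q S Mpq Msp] dual_restr dual_contr assms(2,4-8)
    by (simp add: Int_commute Un_commute)
  then show ?thesis
    using mrestr_mcontr_mlink_left[OF assms(2,4-10)] dual_restr dual_contr
    by (simp add: mlink_commute Un_commute)
qed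

end
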